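(* Under the hypotheses and notation of Theorem 1 (synchronous HSAG with the stated $\gamma,\theta$, conditions $\frac1\kappa+2Lc\eta^2(1+\frac1\beta)\le\frac1n$, $\gamma>0$, $\theta<1$, and $p_j\propto(1-\frac1\kappa)^{m-j}$), suppose moreover that $\bar\theta:=\theta(1+1/\gamma)<1$. Then for all $k\ge 0$, $$\mathbb{E}\big[f(\tilde x^{k})-f(x^* )\big]\le\bar\theta^{\,k}\,\big[f(x^0)-f(x^* )\big].$$
   Context: Setting: $f_1,\dots,f_n:\mathbb{R}^d\to\mathbb{R}$ convex, differentiable, each with $L$-Lipschitz gradient; $f=\frac1n\sum_i f_i$ is $\lambda$-strongly convex with minimizer $x^*$; $S\subseteq[n]$; $c>0,\beta>0,\kappa>1$, $\eta>0$, $m\ge1$; $\gamma=\kappa[1-(1-\frac1\kappa)^m](2c\eta(1-L\eta(1+\beta))-\frac1n-\frac{2c}{\kappa\lambda})$ and $\theta=\max\{\frac{2c}{\gamma\lambda}(1-\frac1\kappa)^m+\frac{2Lc\eta^2}{\gamma}(1+\frac1\beta)\kappa[1-(1-\frac1\kappa)^m],\ (1-\frac1\kappa)^m\}$. Synchronous HSAG algorithm: $x^0\in\mathbb{R}^d$, $\tilde x^0=x^0$, $\alpha_i^0=x^0$. Epoch $k+1$ consists of steps $t=km,\dots,km+m-1$ with $x^{km}=\tilde x^k$. At step $t$, $i_t$ is uniform on $[n]$ independent of the past and $x^{t+1}=x^t-\eta(\nabla f_{i_t}(x^t)-\nabla f_{i_t}(\alpha_{i_t}^t)+\frac1n\sum_i\nabla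 f_i(\alpha_i^t))$. For $i\in S$: $\alpha_i^{t+1}=x^t$ if $i_t=i$, else $\alpha_i^{t+1}=\alpha_i^t$; for $i\notin S$: $\alpha_i^t=\tilde x^k$ throughout epoch $k+1$. At epoch end, $\tilde x^{k+1}$ is chosen from $\{x^{km},\dots,x^{km+m-1}\}$, picking $x^{km+j-1}$ with probability $p_j$, and $x^{(k+1)m}:=\tilde x^{k+1}$. *)

theory Defs
  imports "HOL-Analysis.Analysis" "HOL-Probability.Probability"
begin

definition strongly_convex :: "real \<Rightarrow> ('a::real_normed_vector \<Rightarrow> real) \<Rightarrow> bool" where
  "strongly_convex lam F \<longleftrightarrow>
     (\<forall>x y t. 0 \<le> t \<and> t \<le> 1 \<longrightarrow>
        F ((1 - t) *\<^sub>R x + t *\<^sub>R y) \<le> (1 - t) * F x + t * F y - lam / 2 * t * (1 - t) * (norm (x - y))\<^sup>2)"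

text \<open>One HSAG inner step with chosen component i: returns (x^{t+1}, alpha^{t+1}).
  g i is the gradient of f_i; components are indexed by {..<n}.\<close>
definition hsag_update ::
  "nat \<Rightarrow> (nat \<Rightarrow> 'a::real_inner \<Rightarrow> 'a) \<Rightarrow> nat set \<Rightarrow> real \<Rightarrow> nat \<Rightarrow> 'a \<Rightarrow> (nat \<Rightarrow> 'a) \<Rightarrow> 'a \<times> (nat \<Rightarrow> 'a)" where
  "hsag_update n g S \<eta> i x \<alpha> =
     (x - \<eta> *\<^sub>R (g i x - g i (\<alpha> i) + (1 / real n) *\<^sub>R (\<Sum>j<n. g j (\<alpha> j))),
      (if i \<in> S then \<alpha>(i := x) else \<alpha>))"

text \<open>Run r inner steps from (x, alpha); returns the distribution of
  (list of visited iterates [x^t, ..., x^{t+r-1}], final alpha).\<close>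
fun hsag_run ::
  "nat \<Rightarrow> (nat \<Rightarrow> 'a::real_inner \<Rightarrow> 'a) \<Rightarrow> nat set \<Rightarrow> real \<Rightarrow> nat \<Rightarrow> 'a \<Rightarrow> (nat \<Rightarrow> 'a) \<Rightarrow> ('a list \<times> (nat \<Rightarrow> 'a)) pmf" where
  "hsag_run n g S \<eta> 0 x \<alpha> = return_pmf ([], \<alpha>)"
| "hsag_run n g S \<eta> (Suc r) x \<alpha> =
     bind_pmf (pmf_of_set {..<n}) (\<lambda>i.
       case hsag_update n g S \<eta> i x \<alpha> of (x', \<alpha>') \<Rightarrow>
         map_pmf (\<lambda>(xs, \<alpha>''). (x # xs, \<alpha>'')) (hsag_run n g S \<eta> r x' \<alpha>'))"

text \<open>One epoch: state (x-tilde^k, alpha) where alpha stores the table entries of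
  indices in S (entries outside S are reset to x-tilde^k). The snapshot
  x-tilde^{k+1} is x^{km+j-1} with j drawn from the pmf p on {1..m}.\<close>
definition hsag_epoch ::
  "nat \<Rightarrow> (nat \<Rightarrow> 'a::real_inner \<Rightarrow> 'a) \<Rightarrow> nat set \<Rightarrow> real \<Rightarrow> nat \<Rightarrow> nat pmf \<Rightarrow> 'a \<times> (nat \<Rightarrow> 'a) \<Rightarrow> ('a \<times> (nat \<Rightarrow> 'a)) pmf" where
  "hsag_epoch n g S \<eta> m p st =
     (case st of (xt, \<alpha>) \<Rightarrow>
       bind_pmf (hsag_run n g S \<eta> m xt (\<lambda>i. if i \<in> S then \<alpha> i else xt)) (\<lambda>(xs, \<alpha>').
         map_pmf (\<lambda>j. (xs ! (j - 1), \<alpha>')) p))"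

definition hsag_state ::
  "nat \<Rightarrow> (nat \<Rightarrow> 'a::real_inner \<Rightarrow> 'a) \<Rightarrow> nat set \<Rightarrow> real \<Rightarrow> nat \<Rightarrow> nat pmf \<Rightarrow> 'a \<Rightarrow> nat \<Rightarrow> ('a \<times> (nat \<Rightarrow> 'a)) pmf" where
  "hsag_state n g S \<eta> m p x0 k =
     ((\<lambda>D. bind_pmf D (hsag_epoch n g S \<eta> m p)) ^^ k) (return_pmf (x0, \<lambda>_. x0))"

end

theory Submission
  imports Defs
begin

text \<open>
  Let D_i(y) = f_i(y) - f_i(x*) - <g_i(x*), y - x*> be the Bregman divergences at the optimum.
  Smoothness and convexity give |g_i(y) - g_i(x*)|^2 <= 2 L D_i(y), and the D_i average to
  f(y) - f(x*) because the gradients at x* sum to zero. For the Lyapunov function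
  Phi(x, alpha) = c |x - x*|^2 + (1/n) sum_{i in S} D_i(alpha_i), one inner step gives in expectation
    Phi' <= (1 - 1/kappa) Phi - A (f(x) - f(x*)) + B (1/n) sum_{i notin S} D_i(x~),
  the table entries outside S being frozen at the snapshot x~. Unrolled over an epoch, the
  iterates are weighted by (1 - 1/kappa)^(m-j), which is exactly the snapshot distribution p;
  with strong convexity absorbing the distance term,
  V = gamma (f(x~) - f(x*)) + (1/n) sum_{i in S} D_i(alpha_i) therefore contracts by theta per epoch.
  Finally gamma (f - f(x*)) <= V and V <= (gamma + 1) (f(x0) - f(x*)) initially.
\<close>

lemma has_real_derivative_along_line:
  fixes F :: "'a::real_inner \<Rightarrow> real"
  assumes "\<And>z. (F has_derivative (\<lambda>h. G z \<bullet> h)) (at z)"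
  shows "((\<lambda>t. F (x + t *\<^sub>R d)) has_real_derivative G (x + t *\<^sub>R d) \<bullet> d) (at t)"
proof -
  have "((\<lambda>t. x + t *\<^sub>R d) has_derivative (\<lambda>h. h *\<^sub>R d)) (at t)"
    by (auto intro!: derivative_eq_intros)
  from has_derivative_compose[OF this assms]
  have "((\<lambda>t. F (x + t *\<^sub>R d)) has_derivative (\<lambda>h. G (x + t *\<^sub>R d) \<bullet> (h *\<^sub>R d))) (at t)"
    by (simp add: o_def)
  then show ?thesis
    unfolding has_field_derivative_def by (rule has_derivative_eq_rhs) (auto simp: fun_eq_iff)
qed

lemma convex_on_gradient_inequality:
  fixes F :: "'a::real_inner \<Rightarrow> real"
  assumes cvx: "convex_on UNIV F" and deriv: "\<And>z. (F has_derivative (\<lambda>h. G z \<bullet> h)) (at z)"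
  shows "F x + G x \<bullet> (y - x) \<le> F y"
proof -
  let ?\<phi> = "\<lambda>t. F (x + t *\<^sub>R (y - x))"
  have "convex_on UNIV ?\<phi>"
  proof (rule convex_onI)
    fix u s t :: real assume "0 < u" "u < 1"
    moreover have "x + ((1 - u) *\<^sub>R s + u *\<^sub>R t) *\<^sub>R (y - x)
        = (1 - u) *\<^sub>R (x + s *\<^sub>R (y - x)) + u *\<^sub>R (x + t *\<^sub>R (y - x))"
      by (simp add: algebra_simps)
    ultimately show "?\<phi> ((1 - u) *\<^sub>R s + u *\<^sub>R t) \<le> (1 - u) * ?\<phi> s + u * ?\<phi> t"
      using convex_onD[OF cvx, of u] by auto
  qed simp
  moreover have "(?\<phi> has_real_derivative G x \<bullet> (y - x)) (at 0)"
    using has_real_derivative_along_line[OF deriv, of x "y - x" 0] by simp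
  ultimately have "G x \<bullet> (y - x) * (1 - 0) \<le> ?\<phi> 1 - ?\<phi> 0"
    by (intro convex_on_imp_above_tangent) auto
  then show ?thesis by simp
qed

lemma lipschitz_gradient_upper_bound:
  fixes F :: "'a::real_inner \<Rightarrow> real"
  assumes deriv: "\<And>z. (F has_derivative (\<lambda>h. G z \<bullet> h)) (at z)"
    and lip: "\<And>u v. norm (G u - G v) \<le> L * norm (u - v)"
  shows "F y \<le> F x + G x \<bullet> (y - x) + L / 2 * (norm (y - x))\<^sup>2"
proof -
  let ?d = "y - x"
  let ?\<psi> = "\<lambda>t. F (x + t *\<^sub>R ?d) - t * (G x \<bullet> ?d) - L / 2 * t\<^sup>2 * (norm ?d)\<^sup>2"
  have "?\<psi> 1 \<le> ?\<psi> 0"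
  proof (rule DERIV_nonpos_imp_nonincreasing[where f = ?\<psi>])
    fix t :: real assume t: "0 \<le> t" "t \<le> 1"
    let ?D = "G (x + t *\<^sub>R ?d) \<bullet> ?d - G x \<bullet> ?d - L * t * (norm ?d)\<^sup>2"
    have "(?\<psi> has_real_derivative ?D) (at t)"
      using has_real_derivative_along_line[OF deriv, of x ?d t]
      by (auto intro!: derivative_eq_intros)
    moreover have "G (x + t *\<^sub>R ?d) \<bullet> ?d - G x \<bullet> ?d \<le> L * t * (norm ?d)\<^sup>2"
    proof -
      have "G (x + t *\<^sub>R ?d) \<bullet> ?d - G x \<bullet> ?d \<le> norm (G (x + t *\<^sub>R ?d) - G x) * norm ?d"
        by (metis inner_diff_left norm_cauchy_schwarz)
      also have "\<dots> \<le> L * norm (t *\<^sub>R ?d) * norm ?d"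
        using lip[of "x + t *\<^sub>R ?d" x] by (intro mult_right_mono) auto
      finally show ?thesis
        using t by (simp add: power2_eq_square mult.assoc)
    qed
    ultimately show "\<exists>D. (?\<psi> has_real_derivative D) (at t) \<and> D \<le> 0"
      by (intro exI[of _ ?D]) auto
  qed simp
  then show ?thesis by simp
qed

text \<open>Co-coercivity in Bregman form: descend from \<open>y\<close> along the gradient of the convex
  function \<open>F - \<langle>G x, \<cdot>\<rangle>\<close>, which is minimal at \<open>x\<close>.\<close>
lemma lipschitz_gradient_bregman_bound:
  fixes F :: "'a::real_inner \<Rightarrow> real"
  assumes cvx: "convex_on UNIV F" and deriv: "\<And>z. (F has_derivative (\<lambda>h. G z \<bullet> h)) (at z)"
    and lip: "\<And>u v. norm (G u - G v) \<le> L * norm (u - v)" and L: "L \<ge> 0"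
  shows "(norm (G y - G x))\<^sup>2 \<le> 2 * L * (F y - F x - G x \<bullet> (y - x))"
proof (cases "L = 0")
  case True
  then show ?thesis using lip[of y x] by simp
next
  case False
  with L have L_pos: "L > 0" by simp
  define \<phi> where "\<phi> z = F z - G x \<bullet> z" for z
  define H where "H z = G z - G x" for z
  define y' where "y' = y - (1 / L) *\<^sub>R H y"
  have "(\<phi> has_derivative (\<lambda>h. H z \<bullet> h)) (at z)" for z
    unfolding \<phi>_def H_def inner_diff_left
    by (intro has_derivative_diff deriv bounded_linear_imp_has_derivative bounded_linear_inner_right)
  moreover have "norm (H u - H v) \<le> L * norm (u - v)" for u v
    unfolding H_def using lip[of u v] by simp
  ultimately have "\<phi> y' \<le> \<phi> y + H y \<bullet> (y' - y) + L / 2 * (norm (y' - y))\<^sup>2"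
    by (rule lipschitz_gradient_upper_bound)
  also have "\<dots> = \<phi> y - (norm (H y))\<^sup>2 / (2 * L)"
    using L_pos unfolding y'_def
    by (simp add: power2_norm_eq_inner[symmetric] power_mult_distrib field_simps power2_eq_square)
  finally have "\<phi> y' \<le> \<phi> y - (norm (H y))\<^sup>2 / (2 * L)" .
  moreover have "\<phi> x \<le> \<phi> y'"
    using convex_on_gradient_inequality[OF cvx deriv, of x y'] unfolding \<phi>_def by (simp add: inner_diff_right)
  moreover have "F y - F x - G x \<bullet> (y - x) = \<phi> y - \<phi> x"
    unfolding \<phi>_def by (simp add: inner_diff_right)
  ultimately have "(norm (H y))\<^sup>2 / (2 * L) \<le> F y - F x - G x \<bullet> (y - x)" by linarith
  then show ?thesis
    using L_pos unfolding H_def by (simp add: field_simps)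
qed

lemma gradient_zero_at_minimum:
  fixes F :: "'a::real_inner \<Rightarrow> real"
  assumes "(F has_derivative (\<lambda>h. G \<bullet> h)) (at x)" and "\<And>y. F x \<le> F y"
  shows "G = 0"
proof -
  have "(\<lambda>h. G \<bullet> h) = (\<lambda>h. 0)"
    using assms by (intro differential_zero_maxmin[of x UNIV]) auto
  then have "G \<bullet> G = 0" by metis
  then show ?thesis by simp
qed

lemma strongly_convex_quadratic_growth:
  fixes F :: "'a::real_normed_vector \<Rightarrow> real"
  assumes sc: "strongly_convex lam F" and min: "\<And>y. F x \<le> F y"
  shows "lam / 2 * (norm (y - x))\<^sup>2 \<le> F y - F x"
proof (rule ccontr)
  define a where "a = F y - F x"
  define b where "b = lam / 2 * (norm (y - x))\<^sup>2"
  assume "\<not> ?thesis"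
  then have "a < b" unfolding a_def b_def by simp
  moreover have "0 \<le> a" unfolding a_def using min by simp
  moreover have below: "b * (1 - t) \<le> a" if "0 < t" "t \<le> 1" for t
  proof -
    have "F x \<le> F ((1 - t) *\<^sub>R x + t *\<^sub>R y)" by (rule min)
    also have "\<dots> \<le> (1 - t) * F x + t * F y - lam / 2 * t * (1 - t) * (norm (x - y))\<^sup>2"
      using sc that unfolding strongly_convex_def by auto
    finally have "t * (b * (1 - t)) \<le> t * a"
      unfolding a_def b_def by (simp add: norm_minus_commute algebra_simps)
    then show ?thesis using that by simp
  qed
  ultimately show False
    using below[of "(b - a) / (2 * b)"] by (simp add: field_simps)
qed

lemma norm_diff_power2:
  fixes a b :: "'a::real_inner"
  shows "(norm (a - b))\<^sup>2 = (norm a)\<^sup>2 - 2 * (a \<bullet> b) + (norm b)\<^sup>2"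
  using dot_norm_neg[of a b] by simp

lemma norm_add_power2_le:
  fixes a b :: "'a::real_inner"
  assumes "\<beta> > 0"
  shows "(norm (a + b))\<^sup>2 \<le> (1 + \<beta>) * (norm a)\<^sup>2 + (1 + 1 / \<beta>) * (norm b)\<^sup>2"
proof -
  have "0 \<le> (norm (\<beta> *\<^sub>R a - b))\<^sup>2 / \<beta>" using assms by simp
  also have "\<dots> = \<beta> * (norm a)\<^sup>2 - 2 * (a \<bullet> b) + (norm b)\<^sup>2 / \<beta>"
  proof -
    have "(norm (\<beta> *\<^sub>R a - b))\<^sup>2 = \<beta>\<^sup>2 * (norm a)\<^sup>2 - 2 * \<beta> * (a \<bullet> b) + (norm b)\<^sup>2"
      by (simp add: norm_diff_power2 power_mult_distrib)
    then show ?thesis using assms by (simp add: field_simps power2_eq_square)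
  qed
  finally show ?thesis
    using norm_diff_power2[of a "- b"] by (simp add: algebra_simps add_divide_distrib)
qed

lemma sum_norm_power2_deviation_from_mean_le:
  fixes u :: "'i \<Rightarrow> 'a::real_inner"
  assumes "finite I" and "I \<noteq> {}"
  shows "(\<Sum>i\<in>I. (norm ((1 / real (card I)) *\<^sub>R (\<Sum>j\<in>I. u j) - u i))\<^sup>2) \<le> (\<Sum>i\<in>I. (norm (u i))\<^sup>2)"
proof -
  define N where "N = real (card I)"
  define \<mu> where "\<mu> = (1 / N) *\<^sub>R (\<Sum>j\<in>I. u j)"
  have N: "N > 0" using assms unfolding N_def by (simp add: card_gt_0_iff)
  have sum_u: "(\<Sum>j\<in>I. u j) = N *\<^sub>R \<mu>" unfolding \<mu>_def using N by simp
  have "(\<Sum>i\<in>I. (norm (\<mu> - u i))\<^sup>2) = (\<Sum>i\<in>I. (norm \<mu>)\<^sup>2 - 2 * (\<mu> \<bullet> u i) + (norm (u i))\<^sup>2)"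
    by (simp add: norm_diff_power2)
  also have "\<dots> = N * (norm \<mu>)\<^sup>2 - 2 * (\<mu> \<bullet> (\<Sum>i\<in>I. u i)) + (\<Sum>i\<in>I. (norm (u i))\<^sup>2)"
    by (simp add: sum.distrib sum_subtractf inner_sum_right sum_distrib_left N_def)
  also have "\<dots> = (\<Sum>i\<in>I. (norm (u i))\<^sup>2) - N * (norm \<mu>)\<^sup>2"
    by (simp add: sum_u power2_norm_eq_inner)
  finally show ?thesis using N unfolding \<mu>_def N_def by simp
qed

lemma expectation_add_const_finite_pmf:
  fixes \<phi> :: "'b \<Rightarrow> real"
  assumes "finite (set_pmf M)"
  shows "measure_pmf.expectation M (\<lambda>z. K + \<phi> z) = K + measure_pmf.expectation M \<phi>"
  using assms by (subst Bochner_Integration.integral_add) (auto intro: integrable_measure_pmf_finite)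

lemma expectation_bind_pmf_le:
  fixes h :: "'b \<Rightarrow> real"
  assumes "finite (set_pmf D)" and "\<And>a. a \<in> set_pmf D \<Longrightarrow> finite (set_pmf (K a))"
    and "\<And>a. a \<in> set_pmf D \<Longrightarrow> measure_pmf.expectation (K a) h \<le> u a"
  shows "measure_pmf.expectation (bind_pmf D K) h \<le> measure_pmf.expectation D u"
proof -
  have "measure_pmf.expectation (bind_pmf D K) h
      = (\<Sum>a\<in>set_pmf D. pmf D a * measure_pmf.expectation (K a) h)"
    using assms by (subst pmf_expectation_bind[of "set_pmf D"]) auto
  also have "\<dots> \<le> (\<Sum>a\<in>set_pmf D. u a * pmf D a)"
    using assms(3) by (intro sum_mono) (metis mult.commute mult_left_mono pmf_nonneg)
  also have "\<dots> = measure_pmf.expectation D u"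
    using assms by (intro integral_measure_pmf_real[symmetric]) auto
  finally show ?thesis .
qed

locale hsag_problem =
  fixes f :: "nat \<Rightarrow> 'a::euclidean_space \<Rightarrow> real"
    and g :: "nat \<Rightarrow> 'a \<Rightarrow> 'a"
    and n :: nat and S :: "nat set"
    and L lam :: real and xstar :: 'a
  assumes n_pos: "n \<ge> 1"
    and S_sub: "S \<subseteq> {..<n}"
    and conv: "\<And>i. i < n \<Longrightarrow> convex_on UNIV (f i)"
    and grad: "\<And>i x. i < n \<Longrightarrow> (f i has_derivative (\<lambda>h. g i x \<bullet> h)) (at x)"
    and lip: "\<And>i x y. i < n \<Longrightarrow> norm (g i x - g i y) \<le> L * norm (x - y)"
    and lam_pos: "lam > 0"
    and sc: "strongly_convex lam (\<lambda>x. (1 / real n) * (\<Sum>i<n. f i x))"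
    and opt: "\<And>y. (1 / real n) * (\<Sum>i<n. f i xstar) \<le> (1 / real n) * (\<Sum>i<n. f i y)"
begin

definition F :: "'a \<Rightarrow> real" where
  "F x = (1 / real n) * (\<Sum>i<n. f i x)"

definition bregman :: "nat \<Rightarrow> 'a \<Rightarrow> real" where
  "bregman i y = f i y - f i xstar - g i xstar \<bullet> (y - xstar)"

definition table_gap :: "(nat \<Rightarrow> 'a) \<Rightarrow> real" where
  "table_gap \<alpha> = (1 / real n) * (\<Sum>i\<in>S. bregman i (\<alpha> i))"

definition snapshot_gap :: "'a \<Rightarrow> real" where
  "snapshot_gap y = (1 / real n) * (\<Sum>i\<in>{..<n} - S. bregman i y)"

lemma n_gt_0: "real n > 0"
  using n_pos by simp

lemma L_nonneg: "L \<ge> 0"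
proof -
  obtain b :: 'a where "b \<in> Basis" using nonempty_Basis by blast
  then have "norm b = 1" by simp
  moreover have "norm (g 0 b - g 0 0) \<le> L * norm (b - 0)" using lip[of 0 b 0] n_pos by simp
  ultimately show ?thesis by (metis diff_zero mult.right_neutral norm_ge_zero order_trans)
qed

lemma F_minimal: "F xstar \<le> F y"
  using opt unfolding F_def .

lemma gradient_inequality: "i < n \<Longrightarrow> f i x + g i x \<bullet> (y - x) \<le> f i y"
  using convex_on_gradient_inequality[OF conv grad] .

lemma bregman_nonneg: "i < n \<Longrightarrow> 0 \<le> bregman i y"
  using gradient_inequality[of i xstar y] unfolding bregman_def by simp

lemma gradient_diff_bound: "i < n \<Longrightarrow> (norm (g i y - g i xstar))\<^sup>2 \<le> 2 * L * bregman i y"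
  unfolding bregman_def using lipschitz_gradient_bregman_bound[OF conv grad lip L_nonneg] .

lemma sum_gradients_at_optimum: "(\<Sum>i<n. g i xstar) = 0"
proof -
  have "(F has_derivative (\<lambda>h. ((1 / real n) *\<^sub>R (\<Sum>i<n. g i xstar)) \<bullet> h)) (at xstar)"
  proof -
    have "((\<lambda>x. (1 / real n) * (\<Sum>i<n. f i x))
        has_derivative (\<lambda>h. (1 / real n) * (\<Sum>i<n. g i xstar \<bullet> h))) (at xstar)"
      by (intro has_derivative_mult_right has_derivative_sum grad) simp
    then show ?thesis unfolding F_def[abs_def] by (simp add: inner_sum_left)
  qed
  then have "(1 / real n) *\<^sub>R (\<Sum>i<n. g i xstar) = 0"
    using F_minimal by (rule gradient_zero_at_minimum)
  then show ?thesis using n_gt_0 by simp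
qed

lemma sum_bregman: "(\<Sum>i<n. bregman i y) = real n * (F y - F xstar)"
  using n_gt_0
  by (simp add: bregman_def F_def sum_subtractf inner_sum_left[symmetric] sum_gradients_at_optimum
      right_diff_distrib)

lemma quadratic_growth: "lam / 2 * (norm (y - xstar))\<^sup>2 \<le> F y - F xstar"
  using strongly_convex_quadratic_growth[OF sc[folded F_def[abs_def]] F_minimal] .

lemma table_gap_nonneg: "0 \<le> table_gap \<alpha>"
  unfolding table_gap_def using S_sub by (intro mult_nonneg_nonneg sum_nonneg bregman_nonneg) auto

lemma snapshot_gap_nonneg: "0 \<le> snapshot_gap y"
  unfolding snapshot_gap_def by (intro mult_nonneg_nonneg sum_nonneg bregman_nonneg) auto

lemma table_gap_const_plus_snapshot_gap: "table_gap (\<lambda>_. y) + snapshot_gap y = F y - F xstar"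
proof -
  have "(\<Sum>i<n. bregman i y) = (\<Sum>i\<in>S. bregman i y) + (\<Sum>i\<in>{..<n} - S. bregman i y)"
    using S_sub by (metis finite_lessThan sum.subset_diff add.commute)
  then show ?thesis
    using sum_bregman[of y] n_gt_0 unfolding table_gap_def snapshot_gap_def by (simp add: field_simps)
qed

end

text \<open>The arithmetic of one inner step: \<open>D\<close>, \<open>V1\<close>, \<open>V2\<close> stand for |x - x*|^2 and the means of
  <x - x*, v_i> and |v_i|^2 over the SAGA directions v_i, \<open>H\<close>, \<open>H'\<close> for the table gaps of
  alpha and of the constant table x, \<open>HN\<close> for the snapshot gap and \<open>E\<close> for f(x) - f(x*).\<close>
lemma lyapunov_step_arith:
  fixes c \<eta> L \<beta> \<kappa> lam N D V1 V2 H H' HN E :: real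
  assumes "c > 0" and "\<eta> > 0" and "L \<ge> 0" and "\<beta> > 0" and "\<kappa> > 1" and "lam > 0"
    and "E \<le> V1" and "V2 \<le> 2 * L * (1 + \<beta>) * E + 2 * L * (1 + 1 / \<beta>) * (H + HN)"
    and "H' \<le> E" and "lam * D \<le> 2 * E" and cond: "1 / \<kappa> + 2 * L * c * \<eta>\<^sup>2 * (1 + 1 / \<beta>) \<le> N"
    and "0 \<le> H" and "0 \<le> HN"
  shows "c * (D - 2 * \<eta> * V1 + \<eta>\<^sup>2 * V2) + (1 - N) * H + N * H'
    \<le> (1 - 1 / \<kappa>) * (c * D + H) - (2 * c * \<eta> * (1 - L * \<eta> * (1 + \<beta>)) - N - 2 * c / (\<kappa> * lam)) * E
       + 2 * L * c * \<eta>\<^sup>2 * (1 + 1 / \<beta>) * HN"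
proof -
  have "0 < 1 / \<kappa>" using assms by simp
  moreover have "0 \<le> 2 * L * c * \<eta>\<^sup>2 * (1 + 1 / \<beta>)" using assms by simp
  ultimately have N: "N > 0" using cond by linarith
  have "c * \<eta>\<^sup>2 * V2 \<le> c * \<eta>\<^sup>2 * (2 * L * (1 + \<beta>) * E + 2 * L * (1 + 1 / \<beta>) * (H + HN))"
    using assms by (intro mult_left_mono) auto
  moreover have "(2 * c * \<eta>) * E \<le> (2 * c * \<eta>) * V1"
    using assms by (intro mult_left_mono) auto
  moreover have "N * H' \<le> N * E"
    using assms N by (intro mult_left_mono) auto
  moreover have "c * D / \<kappa> \<le> 2 * c * E / (\<kappa> * lam)"
  proof -
    have "(c / \<kappa>) * (lam * D) \<le> (c / \<kappa>) * (2 * E)"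
      using assms by (intro mult_left_mono) auto
    then show ?thesis using assms by (simp add: field_simps)
  qed
  moreover have "0 \<le> (N - 1 / \<kappa> - 2 * L * c * \<eta>\<^sup>2 * (1 + 1 / \<beta>)) * H"
    using assms by simp
  ultimately show ?thesis
    unfolding power2_eq_square by (simp add: algebra_simps add_divide_distrib diff_divide_distrib)
qed

locale hsag_method = hsag_problem f g n S L lam xstar
  for f :: "nat \<Rightarrow> 'a::euclidean_space \<Rightarrow> real" and g n S L lam xstar +
  fixes c \<beta> \<kappa> \<eta> :: real
  assumes c_pos: "c > 0" and beta_pos: "\<beta> > 0" and kappa_gt: "\<kappa> > 1" and eta_pos: "\<eta> > 0"
    and cond: "1 / \<kappa> + 2 * L * c * \<eta>\<^sup>2 * (1 + 1 / \<beta>) \<le> 1 / real n"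
begin

definition rho :: real where
  "rho = 1 - 1 / \<kappa>"

definition decrease_coef :: real where
  "decrease_coef = 2 * c * \<eta> * (1 - L * \<eta> * (1 + \<beta>)) - 1 / real n - 2 * c / (\<kappa> * lam)"

definition snapshot_coef :: real where
  "snapshot_coef = 2 * L * c * \<eta>\<^sup>2 * (1 + 1 / \<beta>)"

definition lyapunov :: "'a \<Rightarrow> (nat \<Rightarrow> 'a) \<Rightarrow> real" where
  "lyapunov x \<alpha> = c * (norm (x - xstar))\<^sup>2 + table_gap \<alpha>"

definition saga_dir :: "(nat \<Rightarrow> 'a) \<Rightarrow> 'a \<Rightarrow> nat \<Rightarrow> 'a" where
  "saga_dir \<alpha> x i = g i x - g i (\<alpha> i) + (1 / real n) *\<^sub>R (\<Sum>j<n. g j (\<alpha> j))"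

definition table_update :: "(nat \<Rightarrow> 'a) \<Rightarrow> 'a \<Rightarrow> nat \<Rightarrow> nat \<Rightarrow> 'a" where
  "table_update \<alpha> x i = (if i \<in> S then \<alpha>(i := x) else \<alpha>)"

lemma hsag_update_eq:
  "hsag_update n g S \<eta> i x \<alpha> = (x - \<eta> *\<^sub>R saga_dir \<alpha> x i, table_update \<alpha> x i)"
  unfolding hsag_update_def saga_dir_def table_update_def by simp

lemma rho_pos: "rho > 0"
  using kappa_gt unfolding rho_def by (simp add: field_simps)

lemma mean_inner_saga_dir_ge:
  "F x - F xstar \<le> (1 / real n) * (\<Sum>i<n. (x - xstar) \<bullet> saga_dir \<alpha> x i)"
proof -
  have "(\<Sum>i<n. saga_dir \<alpha> x i) = (\<Sum>i<n. g i x)"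
    unfolding saga_dir_def using n_gt_0 by (simp add: sum.distrib sum_subtractf sum_constant_scaleR)
  then have "(\<Sum>i<n. (x - xstar) \<bullet> saga_dir \<alpha> x i) = (\<Sum>i<n. g i x \<bullet> (x - xstar))"
    by (simp add: inner_sum_right[symmetric] inner_sum_left inner_commute)
  also have "\<dots> \<ge> (\<Sum>i<n. f i x - f i xstar)"
  proof (rule sum_mono)
    fix i assume "i \<in> {..<n}"
    then show "f i x - f i xstar \<le> g i x \<bullet> (x - xstar)"
      using gradient_inequality[of i x xstar] unfolding inner_diff_right by simp
  qed
  finally have "(\<Sum>i<n. f i x) - (\<Sum>i<n. f i xstar) \<le> (\<Sum>i<n. (x - xstar) \<bullet> saga_dir \<alpha> x i)"
    by (simp add: sum_subtractf)
  then show ?thesis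
    unfolding F_def right_diff_distrib[symmetric] using n_gt_0 by (intro mult_left_mono) auto
qed

text \<open>The SAGA direction splits as (g_i(x) - g_i(x*)) plus the deviation of
  u_i = g_i(alpha_i) - g_i(x*) from its mean; the mean of the u_i is the table average of
  the gradients because the gradients at x* sum to zero.\<close>
lemma mean_norm_saga_dir_le:
  assumes frozen: "\<forall>i<n. i \<notin> S \<longrightarrow> \<alpha> i = xt"
  shows "(1 / real n) * (\<Sum>i<n. (norm (saga_dir \<alpha> x i))\<^sup>2)
    \<le> 2 * L * (1 + \<beta>) * (F x - F xstar) + 2 * L * (1 + 1 / \<beta>) * (table_gap \<alpha> + snapshot_gap xt)"
proof -
  define a where "a i = g i x - g i xstar" for i
  define u where "u i = g i (\<alpha> i) - g i xstar" for i
  define \<mu> where "\<mu> = (1 / real (card {..<n})) *\<^sub>R (\<Sum>j<n. u j)"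
  have "saga_dir \<alpha> x i = a i + (\<mu> - u i)" for i
    unfolding saga_dir_def a_def u_def \<mu>_def by (simp add: sum_subtractf sum_gradients_at_optimum)
  then have "(\<Sum>i<n. (norm (saga_dir \<alpha> x i))\<^sup>2)
      \<le> (\<Sum>i<n. (1 + \<beta>) * (norm (a i))\<^sup>2 + (1 + 1 / \<beta>) * (norm (\<mu> - u i))\<^sup>2)"
    by (auto intro!: sum_mono norm_add_power2_le beta_pos)
  also have "\<dots> = (1 + \<beta>) * (\<Sum>i<n. (norm (a i))\<^sup>2) + (1 + 1 / \<beta>) * (\<Sum>i<n. (norm (\<mu> - u i))\<^sup>2)"
    by (simp add: sum.distrib sum_distrib_left)
  also have "\<dots> \<le> (1 + \<beta>) * (2 * L * (real n * (F x - F xstar)))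
      + (1 + 1 / \<beta>) * (2 * L * (real n * (table_gap \<alpha> + snapshot_gap xt)))"
  proof (intro add_mono mult_left_mono)
    have "(\<Sum>i<n. (norm (a i))\<^sup>2) \<le> (\<Sum>i<n. 2 * L * bregman i x)"
      unfolding a_def by (intro sum_mono gradient_diff_bound) auto
    then show "(\<Sum>i<n. (norm (a i))\<^sup>2) \<le> 2 * L * (real n * (F x - F xstar))"
      by (simp add: sum_distrib_left[symmetric] sum_bregman)
    have "(\<Sum>i<n. (norm (\<mu> - u i))\<^sup>2) \<le> (\<Sum>i<n. (norm (u i))\<^sup>2)"
      unfolding \<mu>_def using n_pos by (intro sum_norm_power2_deviation_from_mean_le) (auto simp: lessThan_empty_iff)
    also have "\<dots> \<le> (\<Sum>i<n. 2 * L * bregman i (\<alpha> i))"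
      unfolding u_def by (intro sum_mono gradient_diff_bound) auto
    also have "\<dots> = 2 * L * ((\<Sum>i\<in>S. bregman i (\<alpha> i)) + (\<Sum>i\<in>{..<n} - S. bregman i xt))"
      using S_sub frozen
      by (simp add: sum_distrib_left[symmetric] sum.subset_diff[of S "{..<n}"] add.commute)
    also have "\<dots> = 2 * L * (real n * (table_gap \<alpha> + snapshot_gap xt))"
      unfolding table_gap_def snapshot_gap_def using n_gt_0 by (simp add: field_simps)
    finally show "(\<Sum>i<n. (norm (\<mu> - u i))\<^sup>2) \<le> 2 * L * (real n * (table_gap \<alpha> + snapshot_gap xt))" .
  qed (use beta_pos in auto)
  finally show ?thesis
    using n_gt_0 by (simp add: field_simps)
qed

lemma mean_table_gap_update:
  "(1 / real n) * (\<Sum>i<n. table_gap (table_update \<alpha> x i))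
    = (1 - 1 / real n) * table_gap \<alpha> + (1 / real n) * table_gap (\<lambda>_. x)"
proof -
  have finS: "finite S" using S_sub finite_subset by blast
  have card_S: "card S \<le> n" using S_sub by (metis card_lessThan card_mono finite_lessThan)
  have updated: "table_gap (\<alpha>(i := x)) = table_gap \<alpha> + (1 / real n) * (bregman i x - bregman i (\<alpha> i))"
    if "i \<in> S" for i
  proof -
    have "(\<Sum>j\<in>S. bregman j ((\<alpha>(i := x)) j)) = bregman i x + (\<Sum>j\<in>S - {i}. bregman j (\<alpha> j))"
      using that finS by (simp add: sum.remove)
    also have "\<dots> = (\<Sum>j\<in>S. bregman j (\<alpha> j)) + (bregman i x - bregman i (\<alpha> i))"
      using that finS by (simp add: sum.remove)
    finally show ?thesis unfolding table_gap_def by (simp add: distrib_left)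
  qed
  have "(\<Sum>i<n. table_gap (table_update \<alpha> x i))
      = (\<Sum>i\<in>S. table_gap \<alpha> + (1 / real n) * (bregman i x - bregman i (\<alpha> i)))
        + (\<Sum>i\<in>{..<n} - S. table_gap \<alpha>)"
    using S_sub by (simp add: table_update_def sum.subset_diff[of S "{..<n}"] updated add.commute)
  also have "\<dots> = real n * table_gap \<alpha> + table_gap (\<lambda>_. x) - table_gap \<alpha>"
  proof -
    have "(\<Sum>i\<in>S. table_gap \<alpha> + (1 / real n) * (bregman i x - bregman i (\<alpha> i)))
        = real (card S) * table_gap \<alpha> + (table_gap (\<lambda>_. x) - table_gap \<alpha>)"
      unfolding table_gap_def
      by (simp add: sum.distrib sum_subtractf sum_distrib_left[symmetric] right_diff_distrib
          sum_divide_distrib)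
    moreover have "(\<Sum>i\<in>{..<n} - S. table_gap \<alpha>) = (real n - real (card S)) * table_gap \<alpha>"
      using finS S_sub card_S by (simp add: card_Diff_subset of_nat_diff)
    ultimately show ?thesis by (simp add: algebra_simps)
  qed
  finally show ?thesis
    using n_gt_0 by (simp add: field_simps)
qed

lemma expected_lyapunov_step:
  assumes frozen: "\<forall>i<n. i \<notin> S \<longrightarrow> \<alpha> i = xt"
  shows "(1 / real n) * (\<Sum>i<n. lyapunov (x - \<eta> *\<^sub>R saga_dir \<alpha> x i) (table_update \<alpha> x i))
    \<le> rho * lyapunov x \<alpha> - decrease_coef * (F x - F xstar) + snapshot_coef * snapshot_gap xt"
proof -
  define V1 where "V1 = (1 / real n) * (\<Sum>i<n. (x - xstar) \<bullet> saga_dir \<alpha> x i)"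
  define V2 where "V2 = (1 / real n) * (\<Sum>i<n. (norm (saga_dir \<alpha> x i))\<^sup>2)"
  have distance_part: "(1 / real n) * (\<Sum>i<n. c * (norm (x - \<eta> *\<^sub>R saga_dir \<alpha> x i - xstar))\<^sup>2)
      = c * ((norm (x - xstar))\<^sup>2 - 2 * \<eta> * V1 + \<eta>\<^sup>2 * V2)"
  proof -
    define d where "d = x - xstar"
    have "x - \<eta> *\<^sub>R saga_dir \<alpha> x i - xstar = d - \<eta> *\<^sub>R saga_dir \<alpha> x i" for i
      unfolding d_def by (simp add: algebra_simps)
    then show ?thesis
      unfolding V1_def V2_def d_def[symmetric] using n_gt_0
      by (simp add: norm_diff_power2 power_mult_distrib sum.distrib sum_subtractf
          sum_distrib_left[symmetric] algebra_simps)
  qed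
  have "(1 / real n) * (\<Sum>i<n. lyapunov (x - \<eta> *\<^sub>R saga_dir \<alpha> x i) (table_update \<alpha> x i))
      = (1 / real n) * (\<Sum>i<n. c * (norm (x - \<eta> *\<^sub>R saga_dir \<alpha> x i - xstar))\<^sup>2)
        + (1 / real n) * (\<Sum>i<n. table_gap (table_update \<alpha> x i))"
    unfolding lyapunov_def by (simp add: sum.distrib distrib_left)
  also have "\<dots> = c * ((norm (x - xstar))\<^sup>2 - 2 * \<eta> * V1 + \<eta>\<^sup>2 * V2)
        + (1 - 1 / real n) * table_gap \<alpha> + (1 / real n) * table_gap (\<lambda>_. x)"
    unfolding distance_part mean_table_gap_update by simp
  also have "\<dots> \<le> rho * (c * (norm (x - xstar))\<^sup>2 + table_gap \<alpha>) - decrease_coef * (F x - F xstar)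
      + snapshot_coef * snapshot_gap xt"
    unfolding rho_def decrease_coef_def snapshot_coef_def
  proof (rule lyapunov_step_arith[OF c_pos eta_pos L_nonneg beta_pos kappa_gt lam_pos _ _ _ _ cond
        table_gap_nonneg snapshot_gap_nonneg])
    show "F x - F xstar \<le> V1" unfolding V1_def by (rule mean_inner_saga_dir_ge)
    show "V2 \<le> 2 * L * (1 + \<beta>) * (F x - F xstar) + 2 * L * (1 + 1 / \<beta>) * (table_gap \<alpha> + snapshot_gap xt)"
      unfolding V2_def using frozen by (rule mean_norm_saga_dir_le)
    show "table_gap (\<lambda>_. x) \<le> F x - F xstar"
      using table_gap_const_plus_snapshot_gap[of x] snapshot_gap_nonneg[of x] by linarith
    show "lam * (norm (x - xstar))\<^sup>2 \<le> 2 * (F x - F xstar)"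
      using quadratic_growth[of x] by simp
  qed
  finally show ?thesis unfolding lyapunov_def .
qed

lemma finite_set_pmf_hsag_run: "finite (set_pmf (hsag_run n g S \<eta> r x \<alpha>))"
proof (induction r arbitrary: x \<alpha>)
  case (Suc r)
  then show ?case using n_pos by (auto simp: lessThan_empty_iff split: prod.split)
qed simp

definition run_value :: "nat \<Rightarrow> 'a list \<times> (nat \<Rightarrow> 'a) \<Rightarrow> real" where
  "run_value r = (\<lambda>(xs, \<alpha>'). table_gap \<alpha>'
     + decrease_coef * (\<Sum>j<r. rho ^ (r - 1 - j) * (F (xs ! j) - F xstar)))"

lemma run_value_Cons:
  "run_value (Suc r) (x # xs, \<alpha>') = decrease_coef * rho ^ r * (F x - F xstar) + run_value r (xs, \<alpha>')"
  unfolding run_value_def prod.case by (subst sum.lessThan_Suc_shift) (simp add: algebra_simps)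

lemma expected_run_value_le:
  assumes "\<forall>i<n. i \<notin> S \<longrightarrow> \<alpha> i = xt"
  shows "measure_pmf.expectation (hsag_run n g S \<eta> r x \<alpha>) (run_value r)
    \<le> rho ^ r * lyapunov x \<alpha> + snapshot_coef * snapshot_gap xt * (\<Sum>j<r. rho ^ j)"
  using assms
proof (induction r arbitrary: x \<alpha>)
  case 0
  then show ?case by (simp add: run_value_def lyapunov_def less_imp_le[OF c_pos])
next
  case (Suc r)
  let ?gap = "decrease_coef * rho ^ r * (F x - F xstar)"
  let ?tail = "snapshot_coef * snapshot_gap xt * (\<Sum>j<r. rho ^ j)"
  define x' where "x' i = x - \<eta> *\<^sub>R saga_dir \<alpha> x i" for i
  define run' where "run' i = map_pmf (\<lambda>(xs, \<alpha>''). (x # xs, \<alpha>''))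
      (hsag_run n g S \<eta> r (x' i) (table_update \<alpha> x i))" for i
  have branch: "measure_pmf.expectation (run' i) (run_value (Suc r))
      \<le> ?gap + rho ^ r * lyapunov (x' i) (table_update \<alpha> x i) + ?tail" for i
  proof -
    have "\<forall>j<n. j \<notin> S \<longrightarrow> table_update \<alpha> x i j = xt"
      using Suc.prems unfolding table_update_def by auto
    note IH = Suc.IH[OF this, of "x' i"]
    have "measure_pmf.expectation (run' i) (run_value (Suc r))
        = measure_pmf.expectation (hsag_run n g S \<eta> r (x' i) (table_update \<alpha> x i)) (\<lambda>z. ?gap + run_value r z)"
      unfolding run'_def by (simp add: case_prod_unfold run_value_Cons)
    also have "\<dots> = ?gap + measure_pmf.expectation (hsag_run n g S \<eta> r (x' i) (table_update \<alpha> x i)) (run_value r)"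
      by (rule expectation_add_const_finite_pmf[OF finite_set_pmf_hsag_run])
    finally show ?thesis using IH by simp
  qed
  have "measure_pmf.expectation (hsag_run n g S \<eta> (Suc r) x \<alpha>) (run_value (Suc r))
      = (1 / real n) * (\<Sum>i<n. measure_pmf.expectation (run' i) (run_value (Suc r)))"
    unfolding hsag_run.simps hsag_update_eq prod.case run'_def x'_def
    using n_pos finite_set_pmf_hsag_run
    by (subst pmf_expectation_bind_pmf_of_set)
      (auto simp: lessThan_empty_iff sum_distrib_left divide_inverse mult.commute)
  also have "\<dots> \<le> (1 / real n) * (\<Sum>i<n. ?gap + rho ^ r * lyapunov (x' i) (table_update \<alpha> x i) + ?tail)"
    using n_gt_0 branch by (intro mult_left_mono sum_mono) auto
  also have "\<dots> = ?gap + ?tail + rho ^ r * ((1 / real n) * (\<Sum>i<n. lyapunov (x' i) (table_update \<alpha> x i)))"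
  proof -
    have "(\<Sum>i<n. ?gap + rho ^ r * lyapunov (x' i) (table_update \<alpha> x i) + ?tail)
        = real n * (?gap + ?tail) + rho ^ r * (\<Sum>i<n. lyapunov (x' i) (table_update \<alpha> x i))"
      by (simp add: sum.distrib sum_distrib_left[symmetric] distrib_left)
    then show ?thesis using n_gt_0 by (simp add: field_simps)
  qed
  also have "\<dots> \<le> ?gap + ?tail
      + rho ^ r * (rho * lyapunov x \<alpha> - decrease_coef * (F x - F xstar) + snapshot_coef * snapshot_gap xt)"
    unfolding x'_def using expected_lyapunov_step[OF Suc.prems] rho_pos
    by (intro add_left_mono mult_left_mono) auto
  also have "\<dots> = rho ^ Suc r * lyapunov x \<alpha> + snapshot_coef * snapshot_gap xt * (\<Sum>j<Suc r. rho ^ j)"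
    by (simp add: algebra_simps)
  finally show ?case .
qed

end

locale hsag_epochs = hsag_method f g n S L lam xstar c \<beta> \<kappa> \<eta>
  for f :: "nat \<Rightarrow> 'a::euclidean_space \<Rightarrow> real" and g n S L lam xstar c \<beta> \<kappa> \<eta> +
  fixes m :: nat and p :: "nat pmf" and \<gamma> \<theta> :: real
  assumes m_pos: "m \<ge> 1"
    and gamma_def: "\<gamma> = \<kappa> * (1 - (1 - 1 / \<kappa>) ^ m) *
          (2 * c * \<eta> * (1 - L * \<eta> * (1 + \<beta>)) - 1 / real n - 2 * c / (\<kappa> * lam))"
    and theta_def: "\<theta> = max (2 * c / (\<gamma> * lam) * (1 - 1 / \<kappa>) ^ m
          + 2 * L * c * \<eta>\<^sup>2 / \<gamma> * (1 + 1 / \<beta>) * \<kappa> * (1 - (1 - 1 / \<kappa>) ^ m))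
          ((1 - 1 / \<kappa>) ^ m)"
    and gamma_pos: "\<gamma> > 0"
    and p_def: "\<And>j. pmf p j = (if 1 \<le> j \<and> j \<le> m
          then (1 - 1 / \<kappa>) ^ (m - j) / (\<Sum>l\<in>{1..m}. (1 - 1 / \<kappa>) ^ (m - l)) else 0)"
begin

definition weight_sum :: real where
  "weight_sum = (\<Sum>l<m. rho ^ l)"

definition epoch_value :: "'a \<times> (nat \<Rightarrow> 'a) \<Rightarrow> real" where
  "epoch_value st = \<gamma> * (F (fst st) - F xstar) + table_gap (snd st)"

lemma rho_pow_m: "rho ^ m < 1" "0 \<le> rho ^ m"
proof -
  have "rho < 1" using kappa_gt unfolding rho_def by simp
  then show "rho ^ m < 1" using rho_pos m_pos by (simp add: power_less_one_iff)
  show "0 \<le> rho ^ m" using rho_pos by simp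
qed

lemma weight_sum_eq: "weight_sum = \<kappa> * (1 - rho ^ m)"
proof -
  have "rho \<noteq> 1" using kappa_gt unfolding rho_def by simp
  then have "weight_sum = (1 - rho ^ m) / (1 - rho)" unfolding weight_sum_def by (simp add: sum_gp_strict)
  also have "1 - rho = 1 / \<kappa>" unfolding rho_def by simp
  finally show ?thesis by simp
qed

lemma weight_sum_pos: "weight_sum > 0"
  unfolding weight_sum_eq using rho_pow_m kappa_gt by simp

lemma gamma_eq: "\<gamma> = weight_sum * decrease_coef"
  unfolding gamma_def weight_sum_eq decrease_coef_def rho_def by simp

lemma sum_rho_pow_rev: "(\<Sum>l\<in>{1..m}. rho ^ (m - l)) = weight_sum"
  unfolding weight_sum_def One_nat_def sum.atLeast1_atMost_eq
  using sum.nat_diff_reindex[of "\<lambda>l. rho ^ l" m] by simp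

lemma pmf_p: "pmf p j = (if j \<in> {1..m} then rho ^ (m - j) / weight_sum else 0)"
  using p_def[of j] sum_rho_pow_rev unfolding rho_def by simp

lemma set_pmf_p: "set_pmf p \<subseteq> {1..m}"
  using pmf_p by (auto simp: set_pmf_eq split: if_splits)

lemma finite_set_pmf_hsag_epoch: "finite (set_pmf (hsag_epoch n g S \<eta> m p st))"
  using finite_set_pmf_hsag_run finite_subset[OF set_pmf_p]
  unfolding hsag_epoch_def by (auto split: prod.split)

lemma expectation_p: "measure_pmf.expectation p \<phi> = (\<Sum>j\<in>{1..m}. \<phi> j * (rho ^ (m - j) / weight_sum))"
  using set_pmf_p by (subst integral_measure_pmf_real[of "{1..m}"]) (auto simp: pmf_p)

text \<open>This is where the choice of \<open>p\<close> enters: it reproduces the weights of the unrolled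
  one-step recursion.\<close>
lemma expected_snapshot_value:
  "measure_pmf.expectation p (\<lambda>j. epoch_value (xs ! (j - 1), \<alpha>')) = run_value m (xs, \<alpha>')"
proof -
  have "measure_pmf.expectation p (\<lambda>j. epoch_value (xs ! (j - 1), \<alpha>'))
      = table_gap \<alpha>' * ((\<Sum>j\<in>{1..m}. rho ^ (m - j)) / weight_sum)
        + (\<gamma> / weight_sum) * (\<Sum>j\<in>{1..m}. rho ^ (m - j) * (F (xs ! (j - 1)) - F xstar))"
  proof -
    have "(\<gamma> * (F (xs ! (j - 1)) - F xstar) + table_gap \<alpha>') * (rho ^ (m - j) / weight_sum)
        = table_gap \<alpha>' * (rho ^ (m - j) / weight_sum)
          + (\<gamma> / weight_sum) * (rho ^ (m - j) * (F (xs ! (j - 1)) - F xstar))" for j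
      by (simp add: algebra_simps add_divide_distrib diff_divide_distrib)
    then show ?thesis
      by (simp add: expectation_p epoch_value_def sum.distrib sum_distrib_left[symmetric]
          sum_divide_distrib[symmetric])
  qed
  also have "\<dots> = run_value m (xs, \<alpha>')"
    using weight_sum_pos unfolding sum_rho_pow_rev
    by (simp add: run_value_def gamma_eq One_nat_def sum.atLeast1_atMost_eq)
  finally show ?thesis .
qed

lemma theta_ge_rho_pow: "rho ^ m \<le> \<theta>"
  unfolding theta_def rho_def by simp

lemma theta_gamma_ge: "2 * c * rho ^ m / lam + snapshot_coef * weight_sum \<le> \<theta> * \<gamma>"
proof -
  have "2 * c / (\<gamma> * lam) * rho ^ m + snapshot_coef * weight_sum / \<gamma> \<le> \<theta>"
    unfolding theta_def weight_sum_eq snapshot_coef_def rho_def by (simp add: algebra_simps)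
  then have "(2 * c / (\<gamma> * lam) * rho ^ m + snapshot_coef * weight_sum / \<gamma>) * \<gamma> \<le> \<theta> * \<gamma>"
    using gamma_pos by (intro mult_right_mono) auto
  also have "(2 * c / (\<gamma> * lam) * rho ^ m + snapshot_coef * weight_sum / \<gamma>) * \<gamma>
      = 2 * c * rho ^ m / lam + snapshot_coef * weight_sum"
    using gamma_pos lam_pos by (simp add: field_simps)
  finally show ?thesis by simp
qed

lemma expected_epoch_value_le:
  "measure_pmf.expectation (hsag_epoch n g S \<eta> m p (xt, \<alpha>)) epoch_value \<le> \<theta> * epoch_value (xt, \<alpha>)"
proof -
  define \<alpha>\<^sub>0 where "\<alpha>\<^sub>0 = (\<lambda>i. if i \<in> S then \<alpha> i else xt)"
  define E where "E = F xt - F xstar"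
  have "measure_pmf.expectation (hsag_epoch n g S \<eta> m p (xt, \<alpha>)) epoch_value
      \<le> measure_pmf.expectation (hsag_run n g S \<eta> m xt \<alpha>\<^sub>0) (run_value m)"
    unfolding hsag_epoch_def prod.case \<alpha>\<^sub>0_def[symmetric]
    using finite_set_pmf_hsag_run finite_subset[OF set_pmf_p]
    by (intro expectation_bind_pmf_le) (auto simp: expected_snapshot_value[simplified] split: prod.split)
  also have "\<dots> \<le> rho ^ m * lyapunov xt \<alpha>\<^sub>0 + snapshot_coef * snapshot_gap xt * weight_sum"
    unfolding weight_sum_def by (rule expected_run_value_le) (simp add: \<alpha>\<^sub>0_def)
  also have "\<dots> = rho ^ m * c * (norm (xt - xstar))\<^sup>2 + rho ^ m * table_gap \<alpha> + snapshot_coef * weight_sum * snapshot_gap xt"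
    unfolding lyapunov_def table_gap_def \<alpha>\<^sub>0_def by (simp add: algebra_simps)
  also have "\<dots> \<le> (2 * c * rho ^ m / lam + snapshot_coef * weight_sum) * E + \<theta> * table_gap \<alpha>"
  proof -
    have "rho ^ m * c * (norm (xt - xstar))\<^sup>2 \<le> rho ^ m * c * (2 * E / lam)"
      using quadratic_growth[of xt] lam_pos rho_pow_m c_pos unfolding E_def
      by (intro mult_left_mono) (auto simp: field_simps)
    moreover have "snapshot_gap xt \<le> E"
      using table_gap_const_plus_snapshot_gap[of xt] table_gap_nonneg[of "\<lambda>_. xt"] unfolding E_def by linarith
    then have "snapshot_coef * weight_sum * snapshot_gap xt \<le> snapshot_coef * weight_sum * E"
      using L_nonneg c_pos beta_pos weight_sum_pos by (intro mult_left_mono) (auto simp: snapshot_coef_def)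
    moreover have "rho ^ m * table_gap \<alpha> \<le> \<theta> * table_gap \<alpha>"
      using theta_ge_rho_pow table_gap_nonneg by (rule mult_right_mono)
    ultimately show ?thesis by (simp add: algebra_simps)
  qed
  also have "\<dots> \<le> \<theta> * epoch_value (xt, \<alpha>)"
  proof -
    have "0 \<le> E" unfolding E_def using F_minimal[of xt] by simp
    with theta_gamma_ge have "(2 * c * rho ^ m / lam + snapshot_coef * weight_sum) * E \<le> (\<theta> * \<gamma>) * E"
      by (rule mult_right_mono)
    then show ?thesis unfolding epoch_value_def E_def by (simp add: algebra_simps)
  qed
  finally show ?thesis .
qed

lemma hsag_state_Suc:
  "hsag_state n g S \<eta> m p x0 (Suc k) = bind_pmf (hsag_state n g S \<eta> m p x0 k) (hsag_epoch n g S \<eta> m p)"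
  unfolding hsag_state_def by simp

lemma finite_set_pmf_hsag_state: "finite (set_pmf (hsag_state n g S \<eta> m p x0 k))"
  by (induction k) (auto simp: hsag_state_def finite_set_pmf_hsag_epoch[unfolded hsag_state_def])

lemma theta_nonneg: "0 \<le> \<theta>"
  using theta_ge_rho_pow rho_pow_m(2) by linarith

lemma expected_state_value_le:
  "measure_pmf.expectation (hsag_state n g S \<eta> m p x0 k) epoch_value \<le> \<theta> ^ k * epoch_value (x0, \<lambda>_. x0)"
proof (induction k)
  case 0
  then show ?case by (simp add: hsag_state_def)
next
  case (Suc k)
  have "measure_pmf.expectation (hsag_state n g S \<eta> m p x0 (Suc k)) epoch_value
      \<le> measure_pmf.expectation (hsag_state n g S \<eta> m p x0 k) (\<lambda>st. \<theta> * epoch_value st)"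
    unfolding hsag_state_Suc
    using finite_set_pmf_hsag_state finite_set_pmf_hsag_epoch expected_epoch_value_le
    by (intro expectation_bind_pmf_le) (auto simp: split_paired_all)
  also have "\<dots> \<le> \<theta> * (\<theta> ^ k * epoch_value (x0, \<lambda>_. x0))"
    using Suc theta_nonneg by (simp add: mult_left_mono)
  finally show ?case by simp
qed

text \<open>The factor \<open>1 + 1/\<gamma>\<close> coming from the initial value is absorbed into \<open>(1 + 1/\<gamma>)\<^sup>k\<close>,
  which needs \<open>k \<ge> 1\<close>.\<close>
lemma expected_suboptimality_le:
  "measure_pmf.expectation (hsag_state n g S \<eta> m p x0 k) (\<lambda>st. F (fst st) - F xstar)
    \<le> (\<theta> * (1 + 1 / \<gamma>)) ^ k * (F x0 - F xstar)"
proof (cases k)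
  case 0
  then show ?thesis by (simp add: hsag_state_def)
next
  case (Suc k')
  define D where "D = hsag_state n g S \<eta> m p x0 k"
  define X where "X = measure_pmf.expectation D (\<lambda>st. F (fst st) - F xstar)"
  have "finite (set_pmf D)" unfolding D_def by (rule finite_set_pmf_hsag_state)
  then have "measure_pmf.expectation D epoch_value = \<gamma> * X + measure_pmf.expectation D (\<lambda>st. table_gap (snd st))"
    unfolding epoch_value_def[abs_def] X_def
    by (subst Bochner_Integration.integral_add) (auto intro: integrable_measure_pmf_finite)
  moreover have "0 \<le> measure_pmf.expectation D (\<lambda>st. table_gap (snd st))"
    by (simp add: table_gap_nonneg)
  moreover have "measure_pmf.expectation D epoch_value \<le> \<theta> ^ k * epoch_value (x0, \<lambda>_. x0)"
    unfolding D_def by (rule expected_state_value_le)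
  moreover have "epoch_value (x0, \<lambda>_. x0) \<le> (\<gamma> + 1) * (F x0 - F xstar)"
    using table_gap_const_plus_snapshot_gap[of x0] snapshot_gap_nonneg[of x0]
    unfolding epoch_value_def by (simp add: algebra_simps)
  ultimately have "\<gamma> * X \<le> \<theta> ^ k * ((\<gamma> + 1) * (F x0 - F xstar))"
    using theta_nonneg by (smt (verit) mult_left_mono zero_le_power)
  then have "X \<le> \<theta> ^ k * (1 + 1 / \<gamma>) * (F x0 - F xstar)"
    using gamma_pos by (simp add: field_simps)
  also have "\<dots> \<le> \<theta> ^ k * (1 + 1 / \<gamma>) ^ k * (F x0 - F xstar)"
  proof -
    have "1 + 1 / \<gamma> \<le> (1 + 1 / \<gamma>) ^ k"
      using gamma_pos Suc by (intro self_le_power) auto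
    then show ?thesis
      using F_minimal[of x0] theta_nonneg by (intro mult_right_mono mult_left_mono) auto
  qed
  finally show ?thesis unfolding X_def D_def by (simp add: power_mult_distrib)
qed

end

theorem corollary1:
  fixes f :: "nat \<Rightarrow> 'a::euclidean_space \<Rightarrow> real"
    and g :: "nat \<Rightarrow> 'a \<Rightarrow> 'a"
    and n m :: nat and S :: "nat set"
    and L lam c \<beta> \<kappa> \<eta> \<gamma> \<theta> :: real
    and xstar x0 :: 'a and p :: "nat pmf" and k :: nat
  assumes n_pos: "n \<ge> 1"
    and S_sub: "S \<subseteq> {..<n}"
    and conv: "\<And>i. i < n \<Longrightarrow> convex_on UNIV (f i)"
    and grad: "\<And>i x. i < n \<Longrightarrow> (f i has_derivative (\<lambda>h. g i x \<bullet> h)) (at x)"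
    and lip: "\<And>i x y. i < n \<Longrightarrow> norm (g i x - g i y) \<le> L * norm (x - y)"
    and lam_pos: "lam > 0"
    and sc: "strongly_convex lam (\<lambda>x. (1 / real n) * (\<Sum>i<n. f i x))"
    and opt: "\<And>y. (1 / real n) * (\<Sum>i<n. f i xstar) \<le> (1 / real n) * (\<Sum>i<n. f i y)"
    and c_pos: "c > 0" and beta_pos: "\<beta> > 0" and kappa_gt: "\<kappa> > 1"
    and eta_pos: "\<eta> > 0" and m_pos: "m \<ge> 1"
    and gamma_def: "\<gamma> = \<kappa> * (1 - (1 - 1/\<kappa>) ^ m) *
          (2 * c * \<eta> * (1 - L * \<eta> * (1 + \<beta>)) - 1 / real n - 2 * c / (\<kappa> * lam))"
    and theta_def: "\<theta> = max (2 * c / (\<gamma> * lam) * (1 - 1/\<kappa>) ^ m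
          + 2 * L * c * \<eta>\<^sup>2 / \<gamma> * (1 + 1/\<beta>) * \<kappa> * (1 - (1 - 1/\<kappa>) ^ m))
          ((1 - 1/\<kappa>) ^ m)"
    and cond: "1/\<kappa> + 2 * L * c * \<eta>\<^sup>2 * (1 + 1/\<beta>) \<le> 1 / real n"
    and gamma_pos: "\<gamma> > 0" and theta_lt: "\<theta> < 1"
    and p_def: "\<And>j. pmf p j = (if 1 \<le> j \<and> j \<le> m
          then (1 - 1/\<kappa>) ^ (m - j) / (\<Sum>l\<in>{1..m}. (1 - 1/\<kappa>) ^ (m - l)) else 0)"
    and thetabar_lt: "\<theta> * (1 + 1/\<gamma>) < 1"
  shows "measure_pmf.expectation (hsag_state n g S \<eta> m p x0 k)
           (\<lambda>st. (1 / real n) * (\<Sum>i<n. f i (fst st)) - (1 / real n) * (\<Sum>i<n. f i xstar))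
         \<le> (\<theta> * (1 + 1/\<gamma>)) ^ k *
           ((1 / real n) * (\<Sum>i<n. f i x0) - (1 / real n) * (\<Sum>i<n. f i xstar))"
proof -
  interpret hsag_epochs f g n S L lam xstar c \<beta> \<kappa> \<eta> m p \<gamma> \<theta>
    using assms by unfold_locales auto
  show ?thesis
    using expected_suboptimality_le[of x0 k] unfolding F_def .
qed

end
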